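(* Let $\mathcal H=(V,E)$ be a hypergraph with splitting functions and let $R\subseteq V$ satisfy $0<\mathrm{vol}(R)\le\mathrm{vol}(\bar R)$. Let $\varepsilon_0=\mathrm{vol}(R)/\mathrm{vol}(\bar R)$, let $\varepsilon\in[\varepsilon_0,\varepsilon_0+1)$, and set $\mu=\varepsilon-\varepsilon_0\ge0$. Let $S^*$ be a minimizer of $\mathrm{HLC}$ over all subsets of $V$; this is the set returned by Algorithm 1. Then: 1. For every $T\subseteq R$ with $\mathrm{vol}(T)>0$, we have $\mathrm{cond}(S^* )\le\mathrm{cond}(T)$. 2. Let $T\subseteq V$ satisfy $0<\mathrm{vol}(T)\le\mathrm{vol}(\bar T)$, and suppose that for some $\gamma\in(\mu,1)$, $$\frac{\mathrm{vol}(T\cap R)}{\mathrm{vol}(T)}\ge\frac{\mathrm{vol}(R)}{\mathrm{vol}(V)}+\gamma\,\frac{\mathrm{vol}(\bar R)}{\mathrm{vol}(V)}.$$ Then $\mathrm{cond}(S^* )\le\frac{1}{\gamma-\mu}\mathrm{cond}(T)$. In particular, when $\varepsilon=\varepsilon_0$ we get $\mathrm{cond}(S^* )\le\frac1\gamma\mathrm{cond}(T)$.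
   Context: A hypergraph $\mathcal H=(V,E)$ has a finite node set $V$, and each hyperedge $e\in E$ is a subset of $V$. Each hyperedge $e$ carries a splitting function $w_e:2^e\to\mathbb R_{\ge0}$ satisfying $w_e(A)=w_e(e\setminus A)$ for all $A\subseteq e$ and $w_e(\emptyset)=w_e(e)=0$. For $S\subseteq V$, $\mathrm{cut}_{\mathcal H}(S)=\sum_{e\in E}w_e(e\cap S)$. The degree of $v$ is $d_v=\sum_{e\ni v}w_e(\{v\})$, and $\mathrm{vol}(S)=\sum_{v\in S}d_v$. Write $\bar S=V\setminus S$. Hypergraph conductance is $\mathrm{cond}(S)=\mathrm{cut}_{\mathcal H}(S)/\min\{\mathrm{vol}(S),\mathrm{vol}(\bar S)\}$. Define $\Omega_{R,\varepsilon}(S)=\mathrm{vol}(S\cap R)-\varepsilon\,\mathrm{vol}(S\cap\bar R)$. Set $\mathrm{HLC}(S)=\mathrm{cut}_{\mathcal H}(S)/\Omega_{R,\varepsilon}(S)$ if $\Omega_{R,\varepsilon}(S)>0$, and $\mathrm{HLC}(S)=\infty$ otherwise. *)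

theory Defs
  imports "HOL-Analysis.Analysis" "HOL-Library.Extended_Real"
begin

definition hypergraph :: "'a set \<Rightarrow> 'a set set \<Rightarrow> ('a set \<Rightarrow> 'a set \<Rightarrow> real) \<Rightarrow> bool" where
  "hypergraph V E w \<longleftrightarrow> finite V \<and> finite E \<and> (\<forall>e\<in>E. e \<subseteq> V) \<and>
     (\<forall>e\<in>E. \<forall>A. A \<subseteq> e \<longrightarrow> w e A \<ge> 0 \<and> w e A = w e (e - A)) \<and>
     (\<forall>e\<in>E. w e {} = 0 \<and> w e e = 0)"

definition hcut :: "'a set set \<Rightarrow> ('a set \<Rightarrow> 'a set \<Rightarrow> real) \<Rightarrow> 'a set \<Rightarrow> real" where
  "hcut E w S = (\<Sum>e\<in>E. w e (e \<inter> S))"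

definition hdeg :: "'a set set \<Rightarrow> ('a set \<Rightarrow> 'a set \<Rightarrow> real) \<Rightarrow> 'a \<Rightarrow> real" where
  "hdeg E w v = (\<Sum>e\<in>{e\<in>E. v \<in> e}. w e {v})"

definition hvol :: "'a set set \<Rightarrow> ('a set \<Rightarrow> 'a set \<Rightarrow> real) \<Rightarrow> 'a set \<Rightarrow> real" where
  "hvol E w S = (\<Sum>v\<in>S. hdeg E w v)"

definition hcond :: "'a set \<Rightarrow> 'a set set \<Rightarrow> ('a set \<Rightarrow> 'a set \<Rightarrow> real) \<Rightarrow> 'a set \<Rightarrow> real" where
  "hcond V E w S = hcut E w S / min (hvol E w S) (hvol E w (V - S))"

definition Omega :: "'a set \<Rightarrow> 'a set set \<Rightarrow> ('a set \<Rightarrow> 'a set \<Rightarrow> real) \<Rightarrow> 'a set \<Rightarrow> real \<Rightarrow> 'a set \<Rightarrow> real" where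
  "Omega V E w R \<epsilon> S = hvol E w (S \<inter> R) - \<epsilon> * hvol E w (S \<inter> (V - R))"

definition HLC :: "'a set \<Rightarrow> 'a set set \<Rightarrow> ('a set \<Rightarrow> 'a set \<Rightarrow> real) \<Rightarrow> 'a set \<Rightarrow> real \<Rightarrow> 'a set \<Rightarrow> ereal" where
  "HLC V E w R \<epsilon> S = (if Omega V E w R \<epsilon> S > 0
      then ereal (hcut E w S / Omega V E w R \<epsilon> S) else \<infinity>)"

end

theory Submission
  imports Defs
begin

text \<open>Since \<open>\<epsilon> \<ge> vol(R)/vol(V - R)\<close> and \<open>vol(R) \<le> vol(V - R)\<close>, the objective
\<open>\<Omega>(S) = vol(S \<inter> R) - \<epsilon> vol(S - R)\<close> never exceeds \<open>min (vol S) (vol (V - S))\<close>, so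
\<open>cond(S) \<le> HLC(S)\<close> for every \<open>S\<close>. For the minimiser \<open>S\<^sup>*\<close> this gives
\<open>cond(S\<^sup>*) \<le> HLC(S\<^sup>*) \<le> cut(T)/\<Omega>(T)\<close> for every competitor \<open>T\<close>, and it remains to bound
\<open>\<Omega>(T)\<close> from below: \<open>\<Omega>(T) = vol T\<close> when \<open>T \<subseteq> R\<close>, and \<open>\<Omega>(T) \<ge> (\<gamma> - \<mu>) vol T\<close> when
\<open>T\<close> has the stated excess of volume inside \<open>R\<close>.\<close>

lemma splitting_nonneg: "hypergraph V E w \<Longrightarrow> e \<in> E \<Longrightarrow> A \<subseteq> e \<Longrightarrow> 0 \<le> w e A"
  unfolding hypergraph_def by blast

lemma hdeg_nonneg: "hypergraph V E w \<Longrightarrow> 0 \<le> hdeg E w v"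
  unfolding hdeg_def by (auto intro!: sum_nonneg splitting_nonneg)

lemma hvol_nonneg: "hypergraph V E w \<Longrightarrow> 0 \<le> hvol E w A"
  unfolding hvol_def by (simp add: hdeg_nonneg sum_nonneg)

lemma hcut_nonneg: "hypergraph V E w \<Longrightarrow> 0 \<le> hcut E w A"
  unfolding hcut_def by (auto intro!: sum_nonneg splitting_nonneg)

lemma hvol_Int_Diff: "finite A \<Longrightarrow> hvol E w A = hvol E w (A \<inter> B) + hvol E w (A - B)"
  unfolding hvol_def by (rule sum.Int_Diff)

lemma hvol_mono: "hypergraph V E w \<Longrightarrow> A \<subseteq> B \<Longrightarrow> finite B \<Longrightarrow> hvol E w A \<le> hvol E w B"
  unfolding hvol_def by (intro sum_mono2) (auto simp: hdeg_nonneg)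

lemma HLC_leD:
  assumes "HLC V E w R \<epsilon> S \<le> HLC V E w R \<epsilon> T" and "0 < Omega V E w R \<epsilon> T"
  shows "0 < Omega V E w R \<epsilon> S"
    and "hcut E w S / Omega V E w R \<epsilon> S \<le> hcut E w T / Omega V E w R \<epsilon> T"
  using assms by (auto simp: HLC_def split: if_splits)

locale localized_conductance =
  fixes V :: "'a set" and E :: "'a set set" and w :: "'a set \<Rightarrow> 'a set \<Rightarrow> real"
    and R :: "'a set" and \<epsilon> :: real
  assumes hypergraph: "hypergraph V E w"
    and R_subset: "R \<subseteq> V"
    and vol_R_pos: "0 < hvol E w R"
    and vol_R_le: "hvol E w R \<le> hvol E w (V - R)"
    and eps_ge: "hvol E w R / hvol E w (V - R) \<le> \<epsilon>"
begin

abbreviation "vol \<equiv> hvol E w"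
abbreviation "\<Omega> \<equiv> Omega V E w R \<epsilon>"

lemma finite_V: "finite V"
  using hypergraph by (simp add: hypergraph_def)

lemma vol_compl_R_pos: "0 < vol (V - R)"
  using vol_R_pos vol_R_le by linarith

lemma vol_R_le_eps: "vol R \<le> \<epsilon> * vol (V - R)"
  using eps_ge vol_compl_R_pos by (simp add: pos_divide_le_eq)

lemma eps_nonneg: "0 \<le> \<epsilon>"
proof -
  have "0 \<le> vol R / vol (V - R)" using vol_R_pos vol_compl_R_pos by simp
  then show ?thesis using eps_ge by linarith
qed

lemma vol_V: "vol V = vol R + vol (V - R)"
  using hvol_Int_Diff[OF finite_V, of E w R] R_subset by (simp add: Int_absorb1)

lemma Omega_eq: "S \<subseteq> V \<Longrightarrow> \<Omega> S = vol (S \<inter> R) - \<epsilon> * vol (S - R)"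
proof -
  assume "S \<subseteq> V"
  then have "S \<inter> (V - R) = S - R" by blast
  then show ?thesis by (simp add: Omega_def)
qed

lemma Omega_le_vol: "S \<subseteq> V \<Longrightarrow> \<Omega> S \<le> vol S"
proof -
  assume SV: "S \<subseteq> V"
  have "S \<inter> R \<subseteq> S" "finite S" using SV finite_V finite_subset by auto
  then have "vol (S \<inter> R) \<le> vol S" using hvol_mono[OF hypergraph] by blast
  moreover have "0 \<le> \<epsilon> * vol (S - R)" using eps_nonneg hvol_nonneg[OF hypergraph] by simp
  ultimately show ?thesis using Omega_eq[OF SV] by linarith
qed

lemma Omega_le_vol_compl: "S \<subseteq> V \<Longrightarrow> \<Omega> S \<le> vol (V - S)"
proof -
  assume SV: "S \<subseteq> V"
  define a b d where "a = vol (S \<inter> R)" and "b = vol (S - R)" and "d = vol (V - S - R)"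
  have "a \<le> vol R"
    unfolding a_def using hvol_mono[OF hypergraph] R_subset finite_V finite_subset
    by (metis inf_le2)
  moreover have "vol (V - R) = b + d"
  proof -
    have "(V - R) \<inter> S = S - R" "V - R - S = V - S - R" using SV by blast+
    then show ?thesis
      using hvol_Int_Diff[of "V - R" E w S] finite_V unfolding b_def d_def by simp
  qed
  moreover have "d \<le> vol (V - S)"
    unfolding d_def using hvol_mono[OF hypergraph] finite_V by (metis Diff_subset finite_Diff)
  moreover have "0 \<le> b" "0 \<le> d" unfolding b_def d_def by (simp_all add: hvol_nonneg[OF hypergraph])
  moreover have "a - \<epsilon> * b \<le> d"
  \<comment> \<open>\<open>a \<le> vol R\<close> is at most both \<open>\<epsilon> (b + d)\<close> and \<open>b + d\<close>; use the smaller bound\<close>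
  proof (cases "\<epsilon> \<le> 1")
    case True
    have "\<epsilon> * d \<le> d" using mult_right_mono[OF True \<open>0 \<le> d\<close>] by simp
    then show ?thesis
      using \<open>a \<le> vol R\<close> vol_R_le_eps \<open>vol (V - R) = b + d\<close> by (simp add: algebra_simps)
  next
    case False
    have "b \<le> \<epsilon> * b" using False \<open>0 \<le> b\<close> by (simp add: mult_le_cancel_right1)
    then show ?thesis using \<open>a \<le> vol R\<close> vol_R_le \<open>vol (V - R) = b + d\<close> by linarith
  qed
  moreover have "\<Omega> S = a - \<epsilon> * b" using Omega_eq[OF SV] by (simp add: a_def b_def)
  ultimately show ?thesis by linarith
qed

lemma hcond_le_cut_div_Omega:
  assumes "S \<subseteq> V" and "0 < \<Omega> S"
  shows "hcond V E w S \<le> hcut E w S / \<Omega> S"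
  unfolding hcond_def
  using Omega_le_vol[OF assms(1)] Omega_le_vol_compl[OF assms(1)] assms(2) hcut_nonneg[OF hypergraph]
  by (intro divide_left_mono) auto

lemma hcond_minimizer_le:
  assumes "Sstar \<subseteq> V" and "\<forall>S. S \<subseteq> V \<longrightarrow> HLC V E w R \<epsilon> Sstar \<le> HLC V E w R \<epsilon> S"
    and "T \<subseteq> V" and "0 < \<Omega> T"
  shows "hcond V E w Sstar \<le> hcut E w T / \<Omega> T"
proof -
  have "HLC V E w R \<epsilon> Sstar \<le> HLC V E w R \<epsilon> T" using assms(2,3) by blast
  from HLC_leD[OF this assms(4)] hcond_le_cut_div_Omega[OF assms(1)]
  show ?thesis by (meson order_trans)
qed

lemma Omega_subset_R: "T \<subseteq> R \<Longrightarrow> \<Omega> T = vol T"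
proof -
  assume "T \<subseteq> R"
  then have "T \<inter> R = T" "T - R = {}" by blast+
  then show ?thesis using Omega_eq \<open>T \<subseteq> R\<close> R_subset by (simp add: \<open>T - R = {}\<close> hvol_def)
qed

lemma hcond_subset_R: "T \<subseteq> R \<Longrightarrow> hcond V E w T = hcut E w T / vol T"
proof -
  assume TR: "T \<subseteq> R"
  have "vol T \<le> vol R" "vol (V - R) \<le> vol (V - T)"
    using TR hvol_mono[OF hypergraph] finite_V R_subset finite_subset
    by (metis Diff_mono order_refl finite_Diff)+
  then have "min (vol T) (vol (V - T)) = vol T" using vol_R_le by linarith
  then show ?thesis unfolding hcond_def by simp
qed

lemma Omega_ge_of_vol_fraction:
  assumes TV: "T \<subseteq> V" and T_pos: "0 < vol T"
    and frac: "vol (T \<inter> R) / vol T \<ge> vol R / vol V + \<gamma> * (vol (V - R) / vol V)"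
  shows "(\<gamma> - (\<epsilon> - vol R / vol (V - R))) * vol T \<le> \<Omega> T"
proof -
  define x t \<rho> \<rho>' where "x = vol (T \<inter> R)" and "t = vol T" and "\<rho> = vol R" and "\<rho>' = vol (V - R)"
  have \<rho>': "0 < \<rho>'" unfolding \<rho>'_def by (rule vol_compl_R_pos)
  have "vol (T - R) = t - x" using hvol_Int_Diff[of T E w R] TV finite_V finite_subset
    unfolding x_def t_def by (metis add_diff_cancel_left')
  then have \<Omega>T: "\<Omega> T = (1 + \<epsilon>) * x - \<epsilon> * t"
    by (simp add: Omega_eq[OF TV] flip: x_def) (simp add: algebra_simps)
  have "vol R / vol V + \<gamma> * (vol (V - R) / vol V) = (\<rho> + \<gamma> * \<rho>') / (\<rho> + \<rho>')"
    unfolding vol_V \<rho>_def \<rho>'_def by (simp add: add_divide_distrib)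
  then have "(\<rho> + \<gamma> * \<rho>') * t \<le> x * (\<rho> + \<rho>')"
    using frac T_pos vol_R_pos \<rho>' unfolding x_def t_def \<rho>_def by (simp add: divide_le_eq le_divide_eq)
  moreover have "x * \<rho> \<le> x * (\<epsilon> * \<rho>')"
    using vol_R_le_eps hvol_nonneg[OF hypergraph] unfolding x_def \<rho>_def \<rho>'_def by (simp add: mult_left_mono)
  ultimately have "\<rho> * t + \<gamma> * \<rho>' * t - \<epsilon> * \<rho>' * t \<le> ((1 + \<epsilon>) * x - \<epsilon> * t) * \<rho>'"
    by (simp add: algebra_simps)
  also have "\<rho> * t + \<gamma> * \<rho>' * t - \<epsilon> * \<rho>' * t = (\<gamma> - (\<epsilon> - \<rho> / \<rho>')) * t * \<rho>'"
    using \<rho>' by (simp add: field_simps)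
  finally show ?thesis using \<rho>' unfolding \<Omega>T t_def \<rho>_def \<rho>'_def by simp
qed

lemma hcond_minimizer_le_of_vol_fraction:
  assumes "Sstar \<subseteq> V" and "\<forall>S. S \<subseteq> V \<longrightarrow> HLC V E w R \<epsilon> Sstar \<le> HLC V E w R \<epsilon> S"
    and TV: "T \<subseteq> V" and T_pos: "0 < vol T" and T_small: "vol T \<le> vol (V - T)"
    and \<gamma>: "\<epsilon> - vol R / vol (V - R) < \<gamma>"
    and frac: "vol (T \<inter> R) / vol T \<ge> vol R / vol V + \<gamma> * (vol (V - R) / vol V)"
  shows "hcond V E w Sstar \<le> (1 / (\<gamma> - (\<epsilon> - vol R / vol (V - R)))) * hcond V E w T"
proof -
  define c where "c = \<gamma> - (\<epsilon> - vol R / vol (V - R))"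
  have c_pos: "0 < c * vol T" using \<gamma> T_pos unfolding c_def by simp
  have Omega_ge: "c * vol T \<le> \<Omega> T"
    using Omega_ge_of_vol_fraction[OF TV T_pos frac] unfolding c_def .
  have "hcond V E w Sstar \<le> hcut E w T / \<Omega> T"
    using hcond_minimizer_le[OF assms(1,2) TV] c_pos Omega_ge by linarith
  also have "\<dots> \<le> hcut E w T / (c * vol T)"
    using Omega_ge c_pos hcut_nonneg[OF hypergraph] by (intro divide_left_mono) auto
  also have "\<dots> = (1 / c) * hcond V E w T"
    using T_small unfolding hcond_def by simp
  finally show ?thesis unfolding c_def .
qed

end

theorem theorem4:
  fixes V :: "'a set" and E :: "'a set set" and w :: "'a set \<Rightarrow> 'a set \<Rightarrow> real"
    and R Sstar :: "'a set" and \<epsilon> :: real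
  assumes H: "hypergraph V E w"
    and RV: "R \<subseteq> V"
    and Rpos: "0 < hvol E w R"
    and Rle: "hvol E w R \<le> hvol E w (V - R)"
    and eps_lo: "hvol E w R / hvol E w (V - R) \<le> \<epsilon>"
    and eps_hi: "\<epsilon> < hvol E w R / hvol E w (V - R) + 1"
    and SV: "Sstar \<subseteq> V"
    and Smin: "\<forall>S. S \<subseteq> V \<longrightarrow> HLC V E w R \<epsilon> Sstar \<le> HLC V E w R \<epsilon> S"
  shows "(\<forall>T. T \<subseteq> R \<and> 0 < hvol E w T \<longrightarrow> hcond V E w Sstar \<le> hcond V E w T)
    \<and> (\<forall>T \<gamma>. T \<subseteq> V \<and> 0 < hvol E w T \<and> hvol E w T \<le> hvol E w (V - T)
          \<and> \<epsilon> - hvol E w R / hvol E w (V - R) < \<gamma> \<and> \<gamma> < 1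
          \<and> hvol E w (T \<inter> R) / hvol E w T \<ge>
              hvol E w R / hvol E w V + \<gamma> * (hvol E w (V - R) / hvol E w V)
        \<longrightarrow> hcond V E w Sstar \<le> (1 / (\<gamma> - (\<epsilon> - hvol E w R / hvol E w (V - R)))) * hcond V E w T)
    \<and> (\<epsilon> = hvol E w R / hvol E w (V - R) \<longrightarrow>
        (\<forall>T \<gamma>. T \<subseteq> V \<and> 0 < hvol E w T \<and> hvol E w T \<le> hvol E w (V - T)
          \<and> 0 < \<gamma> \<and> \<gamma> < 1
          \<and> hvol E w (T \<inter> R) / hvol E w T \<ge>
              hvol E w R / hvol E w V + \<gamma> * (hvol E w (V - R) / hvol E w V)
        \<longrightarrow> hcond V E w Sstar \<le> (1 / \<gamma>) * hcond V E w T))"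
proof -
  interpret localized_conductance V E w R \<epsilon>
    using H RV Rpos Rle eps_lo by unfold_locales
  have subset_R: "hcond V E w Sstar \<le> hcond V E w T" if "T \<subseteq> R" "0 < hvol E w T" for T
    using hcond_minimizer_le[OF SV Smin, of T] that RV Omega_subset_R hcond_subset_R by auto
  note fraction = hcond_minimizer_le_of_vol_fraction[OF SV Smin]
  \<comment> \<open>\<open>eps_hi\<close> (\<open>\<mu> < 1\<close>) only ensures that admissible \<open>\<gamma>\<close> exist; the bounds do not need it\<close>
  show ?thesis
    using subset_R fraction by (intro conjI allI impI) auto
qed

end
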